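(* Let $R=\mathbb{F}_q+v\mathbb{F}_q+v^2\mathbb{F}_q$ with $v^3=v$. If $C$ is a formally self-dual code of length $n$ over $R$, then its Gray image $\Psi(C)\subseteq\mathbb{F}_q^{3n}$ is a formally self-dual code over $\mathbb{F}_q$.
   Context: $q$ is a prime power and $R=\mathbb{F}_q[v]/\langle v^3-v\rangle$. A linear code of length $n$ over $R$ is an $R$-submodule of $R^n$; $C^\perp=\{x\in R^n:\sum x_iy_i=0\ \forall y\in C\}$. For $c\in R^n$ written uniquely as $a_0+va_1+v^2a_2$ with $a_i\in\mathbb{F}_q^n$, the Gray map is $\Psi(c)=(a_0,a_0+a_2,a_1)\in\mathbb{F}_q^{3n}$, and the Lee weight $w_L(c)$ is the Hamming weight of $\Psi(c)$. A code $C$ over $R$ is formally self-dual if $C$ and $C^\perp$ have the same Lee weight enumerator $\sum_c X^{3n-w_L(c)}Y^{w_L(c)}$; a linear code $D\subseteq\mathbb{F}_q^{3n}$ is formally self-dual if $D$ and its dual (standard inner product) have the same Hamming weight enumerator. *)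

theory Defs
  imports Main
begin

text \<open>An element a0 + v a1 + v^2 a2 (a_i in F_q) is
  represented by the triple (a0, a1, a2).  F_q is any finite field (type class
  finite field), i.e. q is an arbitrary prime power.\<close>

type_synonym 'a Rv = "'a \<times> 'a \<times> 'a"

definition R_add :: "'a::field Rv \<Rightarrow> 'a Rv \<Rightarrow> 'a Rv" where
  "R_add x y = (case x of (a0, a1, a2) \<Rightarrow> case y of (b0, b1, b2) \<Rightarrow>
      (a0 + b0, a1 + b1, a2 + b2))"

text \<open>Multiplication using v^3 = v (hence v^4 = v^2).\<close>
definition R_mul :: "'a::field Rv \<Rightarrow> 'a Rv \<Rightarrow> 'a Rv" where
  "R_mul x y = (case x of (a0, a1, a2) \<Rightarrow> case y of (b0, b1, b2) \<Rightarrow>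
      (a0 * b0,
       a0 * b1 + a1 * b0 + a1 * b2 + a2 * b1,
       a0 * b2 + a1 * b1 + a2 * b0 + a2 * b2))"

definition R_zero :: "'a::field Rv" where
  "R_zero = (0, 0, 0)"

text \<open>Words of length n over R: functions from a finite index type 'n with CARD('n) = n.\<close>

definition R_linear_code :: "('n::finite \<Rightarrow> 'a::field Rv) set \<Rightarrow> bool" where
  "R_linear_code C \<longleftrightarrow>
     (\<lambda>i. R_zero) \<in> C \<and>
     (\<forall>x\<in>C. \<forall>y\<in>C. (\<lambda>i. R_add (x i) (y i)) \<in> C) \<and>
     (\<forall>r. \<forall>x\<in>C. (\<lambda>i. R_mul r (x i)) \<in> C)"

definition R_inner :: "('n::finite \<Rightarrow> 'a::field Rv) \<Rightarrow> ('n \<Rightarrow> 'a Rv) \<Rightarrow> 'a Rv" where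
  "R_inner x y = (let p = (\<lambda>i. R_mul (x i) (y i)) in
     ((\<Sum>i\<in>UNIV. fst (p i)), (\<Sum>i\<in>UNIV. fst (snd (p i))), (\<Sum>i\<in>UNIV. snd (snd (p i)))))"

definition R_dual :: "('n::finite \<Rightarrow> 'a::field Rv) set \<Rightarrow> ('n \<Rightarrow> 'a Rv) set" where
  "R_dual C = {x. \<forall>y\<in>C. R_inner x y = R_zero}"

text \<open>Gray map Psi(a0 + v a1 + v^2 a2) = (a0, a0 + a2, a1) in F_q^{3n}; the 3n coordinates
  are indexed by the disjoint union 'n + 'n + 'n (first, second, third block).\<close>
definition gray :: "('n \<Rightarrow> 'a::field Rv) \<Rightarrow> ('n + 'n + 'n \<Rightarrow> 'a)" where
  "gray c = (\<lambda>j. case j of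
      Inl i \<Rightarrow> fst (c i)
    | Inr (Inl i) \<Rightarrow> fst (c i) + snd (snd (c i))
    | Inr (Inr i) \<Rightarrow> fst (snd (c i)))"

definition hamming_weight :: "('m::finite \<Rightarrow> 'a::zero) \<Rightarrow> nat" where
  "hamming_weight x = card {j. x j \<noteq> 0}"

definition lee_weight :: "('n::finite \<Rightarrow> 'a::field Rv) \<Rightarrow> nat" where
  "lee_weight c = hamming_weight (gray c)"

text \<open>The (homogeneous) enumerator sum_c X^{N - w(c)} Y^{w(c)} of a code
  of length N is represented by its coefficient sequence: the coefficient of
  X^{N-w} Y^w is the number of codewords of weight w (w = 0..N; all others vanish).
  Two enumerators are equal iff these coefficient sequences are equal.\<close>

definition lee_weight_enumerator :: "('n::finite \<Rightarrow> 'a::field Rv) set \<Rightarrow> nat \<Rightarrow> nat" where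
  "lee_weight_enumerator C w = card {c\<in>C. lee_weight c = w}"

definition hamming_weight_enumerator :: "('m::finite \<Rightarrow> 'a::field) set \<Rightarrow> nat \<Rightarrow> nat" where
  "hamming_weight_enumerator D w = card {x\<in>D. hamming_weight x = w}"

definition R_formally_self_dual :: "('n::finite \<Rightarrow> 'a::field Rv) set \<Rightarrow> bool" where
  "R_formally_self_dual C \<longleftrightarrow>
     lee_weight_enumerator C = lee_weight_enumerator (R_dual C)"

definition F_linear_code :: "('m::finite \<Rightarrow> 'a::field) set \<Rightarrow> bool" where
  "F_linear_code D \<longleftrightarrow>
     (\<lambda>j. 0) \<in> D \<and>
     (\<forall>x\<in>D. \<forall>y\<in>D. (\<lambda>j. x j + y j) \<in> D) \<and>
     (\<forall>a. \<forall>x\<in>D. (\<lambda>j. a * x j) \<in> D)"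

definition F_dual :: "('m::finite \<Rightarrow> 'a::field) set \<Rightarrow> ('m \<Rightarrow> 'a) set" where
  "F_dual D = {x. \<forall>y\<in>D. (\<Sum>j\<in>UNIV. x j * y j) = 0}"

definition F_formally_self_dual :: "('m::finite \<Rightarrow> 'a::field) set \<Rightarrow> bool" where
  "F_formally_self_dual D \<longleftrightarrow>
     F_linear_code D \<and> hamming_weight_enumerator D = hamming_weight_enumerator (F_dual D)"

end

theory Submission
  imports Defs
begin

text \<open>The Gray map is a bijection between R^n and F_q^{3n} sending Lee weight to Hamming
  weight, so it transports weight enumerators. It also transports duals: writing
  x y = s0 + v s1 + v^2 s2 for the R-inner product, the F_q-inner products of Psi x with
  Psi y, Psi (v y) and Psi (v^2 y) are 2 s0 + s2, s1 and s0 + s2, which vanish together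
  exactly when x y = 0. As C is closed under multiplication by v and v^2, this gives
  Psi(C^perp) = Psi(C)^perp, and the enumerator identity for C becomes the one for Psi(C).\<close>

lemma sum_UNIV_Plus3:
  fixes f :: "'n::finite + 'n + 'n \<Rightarrow> 'a::comm_monoid_add"
  shows "(\<Sum>j\<in>UNIV. f j) = (\<Sum>i\<in>UNIV. f (Inl i) + f (Inr (Inl i)) + f (Inr (Inr i)))"
proof -
  have "(\<Sum>j\<in>UNIV. f j) = (\<Sum>j\<in>UNIV <+> (UNIV <+> UNIV). f j)" by simp
  also have "\<dots> = (\<Sum>i\<in>UNIV. f (Inl i)) + ((\<Sum>i\<in>UNIV. f (Inr (Inl i))) + (\<Sum>i\<in>UNIV. f (Inr (Inr i))))"
    by (simp only: sum.Plus finite_Plus finite comp_def)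
  finally show ?thesis by (simp add: sum.distrib add.assoc)
qed

definition gray_inv :: "('n + 'n + 'n \<Rightarrow> 'a::field) \<Rightarrow> ('n \<Rightarrow> 'a Rv)" where
  "gray_inv z = (\<lambda>i. (z (Inl i), z (Inr (Inr i)), z (Inr (Inl i)) - z (Inl i)))"

lemma gray_gray_inv: "gray (gray_inv z) = z"
  by (rule ext) (auto simp: gray_def gray_inv_def split: sum.splits)

lemma gray_inv_gray: "gray_inv (gray c) = c"
  by (rule ext) (simp add: gray_def gray_inv_def)

lemma inj_gray: "inj gray"
  by (metis injI gray_inv_gray)

lemma gray_zero: "gray (\<lambda>i. R_zero) = (\<lambda>j. 0)"
  by (rule ext) (auto simp: gray_def R_zero_def split: sum.splits)

lemma gray_R_add: "gray (\<lambda>i. R_add (x i) (y i)) = (\<lambda>j. gray x j + gray y j)"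
  by (rule ext) (auto simp: gray_def R_add_def split_beta split: sum.splits)

lemma gray_R_mul_const: "gray (\<lambda>i. R_mul (a, 0, 0) (x i)) = (\<lambda>j. a * gray x j)"
  by (rule ext) (auto simp: gray_def R_mul_def split_beta algebra_simps split: sum.splits)

lemma F_linear_code_gray_image:
  assumes "R_linear_code C"
  shows "F_linear_code (gray ` C)"
proof -
  have zero: "(\<lambda>i. R_zero) \<in> C"
    and add: "\<And>x y. x \<in> C \<Longrightarrow> y \<in> C \<Longrightarrow> (\<lambda>i. R_add (x i) (y i)) \<in> C"
    and mul: "\<And>r x. x \<in> C \<Longrightarrow> (\<lambda>i. R_mul r (x i)) \<in> C"
    using assms unfolding R_linear_code_def by auto
  show ?thesis
    unfolding F_linear_code_def
  proof (intro conjI ballI allI)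
    show "(\<lambda>j. 0) \<in> gray ` C"
      by (rule rev_image_eqI[OF zero]) (simp add: gray_zero)
  next
    fix u w assume "u \<in> gray ` C" "w \<in> gray ` C"
    then obtain x y where "x \<in> C" "y \<in> C" "u = gray x" "w = gray y" by blast
    then show "(\<lambda>j. u j + w j) \<in> gray ` C"
      by (intro rev_image_eqI[OF add]) (simp_all add: gray_R_add)
  next
    fix a u assume "u \<in> gray ` C"
    then obtain x where "x \<in> C" "u = gray x" by blast
    then show "(\<lambda>j. a * u j) \<in> gray ` C"
      by (intro rev_image_eqI[OF mul[of _ "(a, 0, 0)"]]) (simp_all add: gray_R_mul_const)
  qed
qed

lemma sum_gray_mult:
  fixes x y :: "'n::finite \<Rightarrow> 'a::field Rv"
  shows "(\<Sum>j\<in>UNIV. gray x j * gray y j) =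
    (\<Sum>i\<in>UNIV. fst (x i) * fst (y i) + (fst (x i) + snd (snd (x i))) * (fst (y i) + snd (snd (y i)))
       + fst (snd (x i)) * fst (snd (y i)))"
  by (simp add: sum_UNIV_Plus3 gray_def)

lemma R_inner_components:
  "R_inner x y =
    ((\<Sum>i\<in>UNIV. fst (x i) * fst (y i)),
     (\<Sum>i\<in>UNIV. fst (x i) * fst (snd (y i)) + fst (snd (x i)) * fst (y i)
        + fst (snd (x i)) * snd (snd (y i)) + snd (snd (x i)) * fst (snd (y i))),
     (\<Sum>i\<in>UNIV. fst (x i) * snd (snd (y i)) + fst (snd (x i)) * fst (snd (y i))
        + snd (snd (x i)) * fst (y i) + snd (snd (x i)) * snd (snd (y i))))"
  by (simp add: R_inner_def R_mul_def split_beta)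

lemma sum_gray_mult_eq_R_inner:
  "(\<Sum>j\<in>UNIV. gray x j * gray y j) = 2 * fst (R_inner x y) + snd (snd (R_inner x y))"
  unfolding sum_gray_mult R_inner_components fst_conv snd_conv
  by (simp add: sum_distrib_left sum.distrib[symmetric] algebra_simps)

lemma sum_gray_mult_v_eq_R_inner:
  "(\<Sum>j\<in>UNIV. gray x j * gray (\<lambda>i. R_mul (0, 1, 0) (y i)) j) = fst (snd (R_inner x y))"
  unfolding sum_gray_mult R_inner_components fst_conv snd_conv
  by (rule sum.cong) (auto simp: R_mul_def split_beta algebra_simps)

lemma sum_gray_mult_v2_eq_R_inner:
  "(\<Sum>j\<in>UNIV. gray x j * gray (\<lambda>i. R_mul (0, 0, 1) (y i)) j) =
    fst (R_inner x y) + snd (snd (R_inner x y))"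
  unfolding sum_gray_mult R_inner_components fst_conv snd_conv sum.distrib[symmetric]
  by (rule sum.cong) (auto simp: R_mul_def split_beta algebra_simps)

lemma R_inner_eq_zero_iff_gray:
  fixes x y :: "'n::finite \<Rightarrow> 'a::field Rv"
  shows "R_inner x y = R_zero \<longleftrightarrow>
    (\<Sum>j\<in>UNIV. gray x j * gray y j) = 0 \<and>
    (\<Sum>j\<in>UNIV. gray x j * gray (\<lambda>i. R_mul (0, 1, 0) (y i)) j) = 0 \<and>
    (\<Sum>j\<in>UNIV. gray x j * gray (\<lambda>i. R_mul (0, 0, 1) (y i)) j) = 0"
proof -
  obtain s0 s1 s2 where s: "R_inner x y = (s0, s1, s2)" by (metis prod.exhaust)
  have "s0 = (2 * s0 + s2) - (s0 + s2)" by (simp add: algebra_simps mult_2)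
  then have "2 * s0 + s2 = 0 \<Longrightarrow> s0 + s2 = 0 \<Longrightarrow> s0 = 0" by simp
  \<comment> \<open>the plain lemma also matches the other two sums, so it is unfolded last\<close>
  then show ?thesis
    unfolding sum_gray_mult_v_eq_R_inner sum_gray_mult_v2_eq_R_inner
    unfolding sum_gray_mult_eq_R_inner s R_zero_def by auto
qed

lemma gray_R_dual:
  fixes C :: "('n::finite \<Rightarrow> 'a::field Rv) set"
  assumes "R_linear_code C"
  shows "gray ` R_dual C = F_dual (gray ` C)"
proof -
  have closed: "(\<lambda>i. R_mul r (y i)) \<in> C" if "y \<in> C" for r y
    using assms that unfolding R_linear_code_def by blast
  have dual_iff: "x \<in> R_dual C \<longleftrightarrow> gray x \<in> F_dual (gray ` C)" for x
  proof
    assume x: "x \<in> R_dual C"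
    show "gray x \<in> F_dual (gray ` C)"
      unfolding F_dual_def
    proof (intro CollectI ballI)
      fix z assume "z \<in> gray ` C"
      then obtain y where "y \<in> C" "z = gray y" by blast
      with x show "(\<Sum>j\<in>UNIV. gray x j * z j) = 0"
        by (simp add: R_dual_def R_inner_eq_zero_iff_gray)
    qed
  next
    assume "gray x \<in> F_dual (gray ` C)"
    then have "(\<Sum>j\<in>UNIV. gray x j * gray y j) = 0" if "y \<in> C" for y
      using that unfolding F_dual_def by blast
    then show "x \<in> R_dual C"
      using closed by (simp add: R_dual_def R_inner_eq_zero_iff_gray)
  qed
  show ?thesis
  proof (intro equalityI subsetI)
    fix z assume "z \<in> gray ` R_dual C"
    then show "z \<in> F_dual (gray ` C)" using dual_iff by blast
  next
    fix z assume "z \<in> F_dual (gray ` C)"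
    then have "gray_inv z \<in> R_dual C" by (simp add: dual_iff gray_gray_inv)
    then show "z \<in> gray ` R_dual C" by (metis gray_gray_inv image_eqI)
  qed
qed

lemma hamming_weight_enumerator_gray_image:
  "hamming_weight_enumerator (gray ` C) = lee_weight_enumerator C"
proof
  fix w
  have "{z \<in> gray ` C. hamming_weight z = w} = gray ` {c \<in> C. lee_weight c = w}"
    by (auto simp: lee_weight_def)
  then show "hamming_weight_enumerator (gray ` C) w = lee_weight_enumerator C w"
    unfolding hamming_weight_enumerator_def lee_weight_enumerator_def
    by (simp add: card_image inj_on_subset[OF inj_gray])
qed

theorem theorem19:
  fixes C :: "('n::finite \<Rightarrow> 'a::{field,finite} Rv) set"
  assumes "R_linear_code C"
    and "R_formally_self_dual C"
  shows "F_linear_code (gray ` C) \<and> F_formally_self_dual (gray ` C)"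
proof -
  have "hamming_weight_enumerator (gray ` C) = hamming_weight_enumerator (F_dual (gray ` C))"
    using assms(2)
    by (simp add: gray_R_dual[OF assms(1), symmetric] hamming_weight_enumerator_gray_image
        R_formally_self_dual_def)
  then show ?thesis
    using F_linear_code_gray_image[OF assms(1)] by (simp add: F_formally_self_dual_def)
qed

end
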